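(* Let $G_\sigma$ be an ordered undirected graph on vertex set $\{1,\dots,p\}$ with edge set $E_\sigma$, let $U$ be a $p\times p$ positive definite matrix and let $\boldsymbol{\delta}=(\delta_1,\dots,\delta_p)$ with $\delta_i>0$ for all $i$. Then $$\int \pi^*_{U,\boldsymbol{\delta}}(L_I,D)\,d(L_I,D)<\infty,$$ and, under the probability distribution obtained by normalizing $\pi^*_{U,\boldsymbol{\delta}}$ (viewed as a distribution of $\Omega=LDL^T\in\mathbb{P}_{G_\sigma}$), $E[\Omega_{ij}]$ exists and is finite for all $i,j$.
   Context: For an ordered graph $G_\sigma$ on $\{1,\dots,p\}$ with (undirected) edge set $E_\sigma$, let $\mathbb{P}_{G_\sigma}$ be the set of $p\times p$ symmetric positive definite matrices $\Omega$ with $\Omega_{ij}=0$ whenever $i\neq j$ and $(i,j)\notin E_\sigma$. Every positive definite $\Omega$ has a unique modified Cholesky decomposition $\Omega=LDL^T$, $L$ lower triangular with unit diagonal, $D=\mathrm{diag}(D_1,\dots,D_p)$ with $D_i>0$. Let $L_I=\{L_{ij}: i>j,\ (i,j)\in E_\sigma\}$ (the independent entries); the map $\Omega\mapsto(L_I,D)$ is a bijection from $\mathbb{P}_{G_\sigma}$ onto $\mathbb{R}^{|L_I|}\times(0,\infty)^p$ (the other below-diagonal entries of $L$ are determined by the constraints $\Omega_{ij}=0$). Let $\nu_j=|\{i: i>j,(i,j)\in E_\sigma\}|$. The (unnormalized) generalized $G$-Wishart density with parameters $U,\boldsymbol\delta$ on $\mathbb{P}_{G_\sigma}$ is $\prod_{i=1}^p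 D_i^{\delta_i/2}\exp(-\tfrac12\mathrm{tr}(\Omega U))$; expressed in the coordinates $(L_I,D)$ (including the Jacobian $\prod_j D_j^{\nu_j}$) it is $$\pi^*_{U,\boldsymbol\delta}(L_I,D)=\Big(\prod_{j=1}^p D_j^{(\delta_j+2\nu_j)/2}\Big)\exp\Big(-\tfrac12\sum_{i=1}^p\sum_{j=1}^p U_{ij}\sum_{k=1}^{\min(i,j)}L_{ik}L_{jk}D_k\Big),$$ integrated with respect to Lebesgue measure on $\mathbb{R}^{|L_I|}\times(0,\infty)^p$. *)

theory Defs
  imports "HOL-Probability.Probability"
begin

text \<open>Vertices are 0,...,p-1 (0-indexed version of 1,...,p), ordered by the natural order.  L_I is a real function on the index
  set of independent entries, D a function on {..<p}.\<close>

definition Lidx :: "nat \<Rightarrow> (nat \<Rightarrow> nat \<Rightarrow> bool) \<Rightarrow> (nat \<times> nat) set" where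
  "Lidx p E = {(i, j). j < i \<and> i < p \<and> E i j}"

definition nu :: "nat \<Rightarrow> (nat \<Rightarrow> nat \<Rightarrow> bool) \<Rightarrow> nat \<Rightarrow> nat" where
  "nu p E j = card {i. j < i \<and> i < p \<and> E i j}"

text \<open>The full unit lower triangular factor L determined by the independent entries x and D:
  for a non-edge (i,j), i>j, the constraint Omega_ij = sum_{k<=j} L_ik L_jk D_k = 0 determines
  L_ij = -(sum_{k<j} L_ik L_jk D_k)/D_j.\<close>
function Lfull :: "(nat \<Rightarrow> nat \<Rightarrow> bool) \<Rightarrow> (nat \<times> nat \<Rightarrow> real) \<Rightarrow> (nat \<Rightarrow> real) \<Rightarrow> nat \<Rightarrow> nat \<Rightarrow> real" where
  "Lfull E x d i j =
     (if i = j then 1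
      else if i < j then 0
      else if E i j then x (i, j)
      else - (\<Sum>k<j. Lfull E x d i k * Lfull E x d j k * d k) / d j)"
  by pat_completeness auto
termination
  by (relation "Wellfounded.measure (\<lambda>(E, x, d, i, j). j)") auto

definition Omega :: "(nat \<Rightarrow> nat \<Rightarrow> bool) \<Rightarrow> (nat \<times> nat \<Rightarrow> real) \<Rightarrow> (nat \<Rightarrow> real) \<Rightarrow> nat \<Rightarrow> nat \<Rightarrow> real" where
  "Omega E x d i j = (\<Sum>k\<le>min i j. Lfull E x d i k * Lfull E x d j k * d k)"

definition pistar :: "nat \<Rightarrow> (nat \<Rightarrow> nat \<Rightarrow> bool) \<Rightarrow> (nat \<Rightarrow> nat \<Rightarrow> real) \<Rightarrow> (nat \<Rightarrow> real)
    \<Rightarrow> (nat \<times> nat \<Rightarrow> real) \<Rightarrow> (nat \<Rightarrow> real) \<Rightarrow> real" where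
  "pistar p E U \<delta> x d =
     (\<Prod>j<p. d j powr ((\<delta> j + 2 * real (nu p E j)) / 2)) *
     exp (- (1/2) * (\<Sum>i<p. \<Sum>j<p. U i j * (\<Sum>k\<le>min i j. Lfull E x d i k * Lfull E x d j k * d k)))"

text \<open>Lebesgue measure on R^{|L_I|} x R^p (the D-part is restricted to (0,inf)^p below).\<close>
definition coord_measure :: "nat \<Rightarrow> (nat \<Rightarrow> nat \<Rightarrow> bool) \<Rightarrow> ((nat \<times> nat \<Rightarrow> real) \<times> (nat \<Rightarrow> real)) measure" where
  "coord_measure p E = (PiM (Lidx p E) (\<lambda>_. lborel)) \<Otimes>\<^sub>M (PiM {..<p} (\<lambda>_. lborel))"

definition Dpos :: "nat \<Rightarrow> ((nat \<times> nat \<Rightarrow> real) \<times> (nat \<Rightarrow> real)) set" where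
  "Dpos p = {(x, d). \<forall>k<p. 0 < d k}"

definition pos_def_mat :: "nat \<Rightarrow> (nat \<Rightarrow> nat \<Rightarrow> real) \<Rightarrow> bool" where
  "pos_def_mat p U \<longleftrightarrow> (\<forall>i<p. \<forall>j<p. U i j = U j i) \<and>
     (\<forall>v. (\<exists>i<p. v i \<noteq> 0) \<longrightarrow> 0 < (\<Sum>i<p. \<Sum>j<p. v i * U i j * v j))"

end

theory Submission
  imports Defs
begin

(*
  Positive definiteness of U gives c > 0 with v' U v >= c |v|^2.  Writing tr(Omega U) as
  sum_k D_k L_k' U L_k over the columns L_k of L, this yields tr(Omega U) >= c tr(Omega), where
  tr(Omega) = sum_k D_k sum_i L_ik^2 dominates every |Omega_ij| as well as the part
  sum_k D_k (1 + sum_{(i,k) in L_I} L_ik^2) that only involves the free coordinates.  So the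
  density, and |Omega_ij| times the density, are bounded by multiples of an envelope
  prod_k D_k^(a_k) exp(-c' sum_k D_k (1 + sum_{(i,k) in L_I} L_ik^2)) with a_k = delta_k/2 + nu_k.
  By Tonelli the envelope integrates over L_I as a product of Gaussian integrals, each free
  entry of column k contributing D_k^(-1/2), and then over D as a product of Gamma integrals
  with exponents a_k - nu_k/2 = delta_k/2 > -1.  The total mass is positive because the density
  is positive on the set D > 0 of positive measure.
*)

section \<open>Coercivity of positive definite forms\<close>

lemma compact_unit_sphere_prefix:
  "compact {v :: nat \<Rightarrow> real. (\<forall>i\<ge>p. v i = 0) \<and> (\<Sum>i<p. (v i)\<^sup>2) = 1}"
proof -
  define B where "B = Pi\<^sub>E UNIV (\<lambda>i::nat. if i < p then {-1..1::real} else {0})"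
  have "compactin (product_topology (\<lambda>i. euclidean) UNIV) B"
    unfolding B_def by (subst compactin_PiE) auto
  then have "compact B" by (simp add: euclidean_product_topology)
  moreover have "continuous_on UNIV (\<lambda>v::nat\<Rightarrow>real. \<Sum>i<p. (v i)\<^sup>2)"
    by (intro continuous_intros continuous_on_subset[OF continuous_on_product_coordinates] subset_UNIV)
  then have "closed {v::nat\<Rightarrow>real. (\<Sum>i<p. (v i)\<^sup>2) = 1}"
    using continuous_closed_preimage_constant[OF _ closed_UNIV, of _ 1] by simp
  moreover have "{v. (\<forall>i\<ge>p. v i = 0) \<and> (\<Sum>i<p. (v i)\<^sup>2) = 1} = B \<inter> {v. (\<Sum>i<p. (v i)\<^sup>2) = 1}"
  proof -
    have "\<bar>v i\<bar> \<le> 1" if "(\<Sum>i<p. (v i)\<^sup>2) = 1" "i < p" for v :: "nat \<Rightarrow> real" and i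
    proof -
      have "(v i)\<^sup>2 \<le> (\<Sum>i<p. (v i)\<^sup>2)" using that(2) by (intro member_le_sum) auto
      then show ?thesis using that(1) abs_le_square_iff[of "v i" 1] by simp
    qed
    then show ?thesis unfolding B_def by (auto simp: PiE_iff abs_le_iff not_less split: if_splits)
  qed
  ultimately show ?thesis by (simp add: compact_Int_closed)
qed

lemma pos_def_mat_coercive:
  assumes "pos_def_mat p U"
  obtains c where "c > 0" and "\<And>v. c * (\<Sum>i<p. (v i)\<^sup>2) \<le> (\<Sum>i<p. \<Sum>j<p. v i * U i j * v j)"
proof (cases "p = 0")
  case True
  then show ?thesis using that[of 1] by simp
next
  case False
  define q where "q v = (\<Sum>i<p. \<Sum>j<p. v i * U i j * v j)" for v :: "nat \<Rightarrow> real"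
  define K where "K = {v :: nat \<Rightarrow> real. (\<forall>i\<ge>p. v i = 0) \<and> (\<Sum>i<p. (v i)\<^sup>2) = 1}"
  have "(\<lambda>i. if i = 0 then 1 else 0) \<in> K"
    using False by (simp add: K_def if_distrib[of "\<lambda>t. t\<^sup>2"] cong: if_cong)
  moreover have "continuous_on K q" unfolding q_def
    by (intro continuous_intros continuous_on_subset[OF continuous_on_product_coordinates] subset_UNIV)
  ultimately obtain w where "w \<in> K" and w_min: "\<And>v. v \<in> K \<Longrightarrow> q w \<le> q v"
    using continuous_attains_inf[OF compact_unit_sphere_prefix[of p, folded K_def]] by blast
  then have "\<exists>i<p. w i \<noteq> 0" by (auto simp: K_def intro: ccontr)
  then have "q w > 0" using assms unfolding pos_def_mat_def q_def by blast
  moreover have "q w * (\<Sum>i<p. (v i)\<^sup>2) \<le> q v" for v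
  proof -
    define s where "s = (\<Sum>i<p. (v i)\<^sup>2)"
    have "s \<ge> 0" unfolding s_def by (simp add: sum_nonneg)
    show ?thesis
    proof (cases "s = 0")
      case True
      then have "\<forall>i<p. v i = 0" unfolding s_def by (subst (asm) sum_nonneg_eq_0_iff) auto
      then show ?thesis by (simp add: q_def)
    next
      case False
      with \<open>s \<ge> 0\<close> have "s > 0" by simp
      define u where "u i = (if i < p then v i / sqrt s else 0)" for i
      have sqrt_sq: "sqrt s * sqrt s = s" using \<open>s > 0\<close> by simp
      have "(\<Sum>i<p. (u i)\<^sup>2) = (\<Sum>i<p. (v i)\<^sup>2 / s)"
        using \<open>s > 0\<close> by (intro sum.cong) (simp_all add: u_def power2_eq_square sqrt_sq)
      then have "u \<in> K" using \<open>s > 0\<close> by (simp add: K_def u_def sum_divide_distrib[symmetric] s_def)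
      moreover have "q u = q v / s"
        unfolding q_def sum_divide_distrib
        using \<open>s > 0\<close> by (intro sum.cong) (simp_all add: u_def sqrt_sq)
      ultimately show ?thesis using w_min[of u] \<open>s > 0\<close> by (simp add: s_def field_simps)
    qed
  qed
  ultimately show ?thesis using that unfolding q_def by blast
qed

section \<open>Gaussian and Gamma integrals\<close>

lemma nn_integral_exp_neg_square:
  fixes a :: real
  assumes "a > 0"
  shows "(\<integral>\<^sup>+ t. ennreal (exp (- a * t\<^sup>2)) \<partial>lborel) = ennreal (sqrt pi / sqrt a)"
proof -
  have "has_bochner_integral lborel (\<lambda>t::real. exp (- t\<^sup>2)) (sqrt pi)"
    using has_bochner_integral_even_function[OF gaussian_moment_even_pos[where k=0]] by simp
  then have gauss: "(\<integral>\<^sup>+ s. ennreal (exp (- s\<^sup>2)) \<partial>lborel) = ennreal (sqrt pi)"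
    by (subst nn_integral_eq_integrable) (auto simp: has_bochner_integral_iff)
  have "(\<integral>\<^sup>+ t. ennreal (exp (- a * t\<^sup>2)) \<partial>lborel)
      = \<bar>1 / sqrt a\<bar> * (\<integral>\<^sup>+ s. ennreal (exp (- a * (0 + 1 / sqrt a * s)\<^sup>2)) \<partial>lborel)"
    by (rule nn_integral_real_affine) (use assms in auto)
  also have "\<dots> = ennreal (1 / sqrt a) * ennreal (sqrt pi)"
    using assms by (simp add: power_divide gauss)
  also have "\<dots> = ennreal (sqrt pi / sqrt a)" using assms by (simp add: ennreal_mult'[symmetric])
  finally show ?thesis .
qed

lemma nn_integral_powr_exp_finite:
  fixes b c :: real
  assumes "b > -1" and "c > 0"
  shows "(\<integral>\<^sup>+ t. ennreal (indicator {0<..} t * t powr b * exp (- c * t)) \<partial>lborel) < \<infinity>"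
proof -
  have "(\<integral>\<^sup>+ t. ennreal (indicator {0<..} t * t powr b * exp (- c * t)) \<partial>lborel)
      = \<bar>1 / c\<bar> * (\<integral>\<^sup>+ s. ennreal (indicator {0<..} (0 + 1 / c * s) * (0 + 1 / c * s) powr b
          * exp (- c * (0 + 1 / c * s))) \<partial>lborel)"
    by (rule nn_integral_real_affine) (use assms in auto)
  also have "\<dots> = ennreal (1 / c) * (\<integral>\<^sup>+ s. ennreal (c powr (- b))
      * ennreal (indicator {0..} s * s powr (b + 1 - 1) / exp s) \<partial>lborel)"
  proof (intro arg_cong2[where f = "(*)"] nn_integral_cong)
    fix s :: real
    show "ennreal (indicator {0<..} (0 + 1 / c * s) * (0 + 1 / c * s) powr b * exp (- c * (0 + 1 / c * s)))
        = ennreal (c powr (- b)) * ennreal (indicator {0..} s * s powr (b + 1 - 1) / exp s)"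
    proof (cases "s > 0")
      case True
      then have "(s / c) powr b = s powr b * c powr (- b)"
        using assms by (simp add: powr_divide powr_minus_divide)
      then show ?thesis using True assms by (simp add: ennreal_mult'[symmetric] exp_minus field_simps)
    next
      case False
      then show ?thesis using assms by (cases "s = 0") (auto simp: indicator_def zero_less_divide_iff)
    qed
  qed (use assms in simp)
  also have "\<dots> = ennreal (1 / c) * (ennreal (c powr (- b)) * ennreal (Gamma (b + 1)))"
    using assms by (subst nn_integral_cmult) (auto simp: Gamma_conv_nn_integral_real)
  also have "\<dots> < \<infinity>" by (simp add: ennreal_mult_less_top)
  finally show ?thesis .
qed

section \<open>The modified Cholesky factor\<close>

declare Lfull.simps [simp del]

lemma Lfull_diag [simp]: "Lfull E x d i i = 1"
  by (subst Lfull.simps) simp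

lemma Lfull_above_diag [simp]: "i < j \<Longrightarrow> Lfull E x d i j = 0"
  by (subst Lfull.simps) simp

lemma Lfull_edge: "j < i \<Longrightarrow> E i j \<Longrightarrow> Lfull E x d i j = x (i, j)"
  by (subst Lfull.simps) simp

lemma Omega_eq_sum_lessThan:
  assumes "i < p" and "j < p"
  shows "Omega E x d i j = (\<Sum>k<p. Lfull E x d i k * Lfull E x d j k * d k)"
  unfolding Omega_def using assms
  by (intro sum.mono_neutral_left) (auto simp: min_def not_le)

lemma trace_Omega:
  "(\<Sum>i<p. Omega E x d i i) = (\<Sum>k<p. d k * (\<Sum>i<p. (Lfull E x d i k)\<^sup>2))"
proof -
  have "(\<Sum>i<p. Omega E x d i i) = (\<Sum>i<p. \<Sum>k<p. d k * (Lfull E x d i k)\<^sup>2)"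
    by (simp add: Omega_eq_sum_lessThan power2_eq_square mult_ac)
  also have "\<dots> = (\<Sum>k<p. \<Sum>i<p. d k * (Lfull E x d i k)\<^sup>2)"
    by (rule sum.swap)
  finally show ?thesis by (simp add: sum_distrib_left)
qed

lemma quadratic_Omega:
  "(\<Sum>i<p. \<Sum>j<p. U i j * Omega E x d i j)
    = (\<Sum>k<p. d k * (\<Sum>i<p. \<Sum>j<p. Lfull E x d i k * U i j * Lfull E x d j k))"
proof -
  have "(\<Sum>i<p. \<Sum>j<p. U i j * Omega E x d i j)
      = (\<Sum>i<p. \<Sum>j<p. \<Sum>k<p. d k * (Lfull E x d i k * U i j * Lfull E x d j k))"
    by (simp add: Omega_eq_sum_lessThan sum_distrib_left mult_ac)
  also have "\<dots> = (\<Sum>i<p. \<Sum>k<p. \<Sum>j<p. d k * (Lfull E x d i k * U i j * Lfull E x d j k))"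
    by (intro sum.cong refl sum.swap)
  also have "\<dots> = (\<Sum>k<p. \<Sum>i<p. \<Sum>j<p. d k * (Lfull E x d i k * U i j * Lfull E x d j k))"
    by (rule sum.swap)
  finally show ?thesis by (simp add: sum_distrib_left)
qed

lemma coercive_trace_Omega_le:
  assumes U: "\<And>v. c * (\<Sum>i<p. (v i)\<^sup>2) \<le> (\<Sum>i<p. \<Sum>j<p. v i * U i j * v j)"
    and d: "\<forall>k<p. 0 \<le> d k"
  shows "c * (\<Sum>i<p. Omega E x d i i) \<le> (\<Sum>i<p. \<Sum>j<p. U i j * Omega E x d i j)"
proof -
  have "c * (\<Sum>i<p. Omega E x d i i) = (\<Sum>k<p. d k * (c * (\<Sum>i<p. (Lfull E x d i k)\<^sup>2)))"
    by (simp add: trace_Omega sum_distrib_left mult.left_commute)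
  also have "\<dots> \<le> (\<Sum>k<p. d k * (\<Sum>i<p. \<Sum>j<p. Lfull E x d i k * U i j * Lfull E x d j k))"
    using U d by (intro sum_mono mult_left_mono) auto
  finally show ?thesis by (simp add: quadratic_Omega)
qed

lemma trace_Omega_nonneg: "\<forall>k<p. 0 \<le> d k \<Longrightarrow> 0 \<le> (\<Sum>i<p. Omega E x d i i)"
  unfolding trace_Omega by (intro sum_nonneg mult_nonneg_nonneg) auto

lemma abs_Omega_le_trace:
  assumes d: "\<forall>k<p. 0 \<le> d k" and "i < p" "j < p"
  shows "\<bar>Omega E x d i j\<bar> \<le> (\<Sum>l<p. Omega E x d l l)"
proof -
  have "\<bar>Lfull E x d i k * Lfull E x d j k\<bar> \<le> (\<Sum>l<p. (Lfull E x d l k)\<^sup>2)" for k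
  proof -
    have "\<bar>Lfull E x d i k * Lfull E x d j k\<bar> \<le> ((Lfull E x d i k)\<^sup>2 + (Lfull E x d j k)\<^sup>2) / 2"
      using sum_squares_bound[of "\<bar>Lfull E x d i k\<bar>" "\<bar>Lfull E x d j k\<bar>"] by (simp add: abs_mult)
    also have "\<dots> \<le> (\<Sum>l<p. (Lfull E x d l k)\<^sup>2)"
      using member_le_sum[of i "{..<p}" "\<lambda>l. (Lfull E x d l k)\<^sup>2"]
        member_le_sum[of j "{..<p}" "\<lambda>l. (Lfull E x d l k)\<^sup>2"] assms(2,3)
      by simp
    finally show ?thesis .
  qed
  then have "\<bar>Omega E x d i j\<bar> \<le> (\<Sum>k<p. d k * (\<Sum>l<p. (Lfull E x d l k)\<^sup>2))"
    unfolding Omega_eq_sum_lessThan[OF assms(2,3)] using d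
    by (intro order.trans[OF sum_abs] sum_mono) (simp add: abs_mult mult.commute mult_left_mono)
  then show ?thesis by (simp add: trace_Omega)
qed

lemma pistar_eq:
  "pistar p E U \<delta> x d = (\<Prod>j<p. d j powr ((\<delta> j + 2 * real (nu p E j)) / 2))
      * exp (- (1/2) * (\<Sum>i<p. \<Sum>j<p. U i j * Omega E x d i j))"
  by (simp add: pistar_def Omega_def)

lemma pistar_nonneg: "0 \<le> pistar p E U \<delta> x d"
  by (simp add: pistar_def prod_nonneg)

lemma pistar_pos:
  assumes "\<forall>k<p. 0 < d k"
  shows "0 < pistar p E U \<delta> x d"
proof -
  have "0 < (\<Prod>j<p. d j powr ((\<delta> j + 2 * real (nu p E j)) / 2))"
    using assms by (intro prod_pos) force
  then show ?thesis by (simp add: pistar_eq)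
qed

section \<open>Free entries and the envelope\<close>

definition later_nbrs :: "nat \<Rightarrow> (nat \<Rightarrow> nat \<Rightarrow> bool) \<Rightarrow> nat \<Rightarrow> nat set" where
  "later_nbrs p E j = {i. j < i \<and> i < p \<and> E i j}"

lemma finite_later_nbrs [simp]: "finite (later_nbrs p E j)"
  by (simp add: later_nbrs_def)

lemma card_later_nbrs: "card (later_nbrs p E j) = nu p E j"
  by (simp add: later_nbrs_def nu_def)

lemma Lidx_eq_swap_Sigma: "Lidx p E = prod.swap ` (SIGMA j:{..<p}. later_nbrs p E j)"
  by (force simp: Lidx_def later_nbrs_def)

lemma finite_Lidx: "finite (Lidx p E)"
  by (simp add: Lidx_eq_swap_Sigma)

lemma prod_Lidx: "(\<Prod>ij\<in>Lidx p E. g ij) = (\<Prod>j<p. \<Prod>i\<in>later_nbrs p E j. g (i, j))"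
  unfolding Lidx_eq_swap_Sigma
  by (subst prod.reindex) (auto simp: prod.Sigma case_prod_unfold prod.swap_def)

text \<open>The part of \<open>tr \<Omega> = \<Sum>\<^sub>j D\<^sub>j \<Sum>\<^sub>i L\<^sub>i\<^sub>j\<^sup>2\<close> coming from the unit diagonal of \<open>L\<close> and the
  independent entries \<open>L\<^sub>I\<close>.\<close>
definition indep_trace :: "nat \<Rightarrow> (nat \<Rightarrow> nat \<Rightarrow> bool) \<Rightarrow> (nat \<times> nat \<Rightarrow> real) \<Rightarrow> (nat \<Rightarrow> real) \<Rightarrow> real" where
  "indep_trace p E x d = (\<Sum>j<p. d j * (1 + (\<Sum>i\<in>later_nbrs p E j. (x (i, j))\<^sup>2)))"

definition envelope ::
    "nat \<Rightarrow> (nat \<Rightarrow> nat \<Rightarrow> bool) \<Rightarrow> (nat \<Rightarrow> real) \<Rightarrow> real \<Rightarrow> (nat \<times> nat \<Rightarrow> real) \<Rightarrow> (nat \<Rightarrow> real) \<Rightarrow> real" where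
  "envelope p E a c x d = (\<Prod>j<p. d j powr a j) * exp (- c * indep_trace p E x d)"

lemma indep_trace_le_trace_Omega:
  assumes d: "\<forall>k<p. 0 \<le> d k"
  shows "indep_trace p E x d \<le> (\<Sum>i<p. Omega E x d i i)"
  unfolding indep_trace_def trace_Omega
proof (rule sum_mono)
  fix k assume k: "k \<in> {..<p}"
  have "1 + (\<Sum>i\<in>later_nbrs p E k. (x (i, k))\<^sup>2) = (\<Sum>i\<in>insert k (later_nbrs p E k). (Lfull E x d i k)\<^sup>2)"
    by (simp add: later_nbrs_def Lfull_edge)
  also have "\<dots> \<le> (\<Sum>i<p. (Lfull E x d i k)\<^sup>2)"
    using k by (intro sum_mono2) (auto simp: later_nbrs_def)
  finally show "d k * (1 + (\<Sum>i\<in>later_nbrs p E k. (x (i, k))\<^sup>2)) \<le> d k * (\<Sum>i<p. (Lfull E x d i k)\<^sup>2)"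
    using d k by (intro mult_left_mono) auto
qed

lemma envelope_Dpos_factor:
  "ennreal (envelope p E a c x d) * indicator (Dpos p) (x, d)
    = (\<Prod>j<p. ennreal (indicator {0<..} (d j) * d j powr a j * exp (- c * d j)))
      * (\<Prod>ij\<in>Lidx p E. ennreal (exp (- (c * d (snd ij)) * (x ij)\<^sup>2)))"
proof (cases "\<forall>j<p. 0 < d j")
  case True
  have "exp (- c * indep_trace p E x d)
      = (\<Prod>j<p. exp (- c * d j) * (\<Prod>i\<in>later_nbrs p E j. exp (- (c * d j) * (x (i, j))\<^sup>2)))"
    by (simp add: indep_trace_def sum_distrib_left sum.distrib exp_add exp_sum prod.distrib algebra_simps)
  also have "\<dots> = (\<Prod>j<p. exp (- c * d j)) * (\<Prod>ij\<in>Lidx p E. exp (- (c * d (snd ij)) * (x ij)\<^sup>2))"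
    by (simp add: prod.distrib prod_Lidx)
  finally show ?thesis
    using True
    by (simp add: envelope_def Dpos_def prod.distrib prod_nonneg ennreal_mult'' prod_ennreal mult.assoc)
next
  case False
  then obtain k where "k < p" "\<not> 0 < d k" by auto
  then have "(\<Prod>j<p. ennreal (indicator {0<..} (d j) * d j powr a j * exp (- c * d j))) = 0"
    by (intro prod_zero bexI[of _ k]) auto
  with False show ?thesis by (simp add: Dpos_def)
qed

lemma Lfull_measurable:
  "i < p \<Longrightarrow> (\<lambda>z. Lfull E (fst z) (snd z) i j) \<in> borel_measurable (coord_measure p E)"
proof (induction j arbitrary: i rule: less_induct)
  case (less j)
  consider "i \<le> j" | "j < i" "E i j" | "j < i" "\<not> E i j" by linarith
  then show ?case
  proof cases
    case 1
    then have "(\<lambda>z. Lfull E (fst z) (snd z) i j) = (\<lambda>z. if i = j then 1 else 0)"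
      by (auto simp: le_less)
    then show ?thesis by simp
  next
    case 2
    then have "(i, j) \<in> Lidx p E" using less.prems by (simp add: Lidx_def)
    then show ?thesis using 2 by (simp add: Lfull_edge coord_measure_def)
  next
    case 3
    then have "j < p" using less.prems by simp
    have "(\<lambda>z. Lfull E (fst z) (snd z) i j)
        = (\<lambda>z. - (\<Sum>k<j. Lfull E (fst z) (snd z) i k * Lfull E (fst z) (snd z) j k * snd z k) / snd z j)"
      using 3 by (intro ext, subst Lfull.simps) auto
    moreover have "(\<lambda>z. snd z k) \<in> borel_measurable (coord_measure p E)" if "k \<le> j" for k
      using that \<open>j < p\<close> by (simp add: coord_measure_def)
    ultimately show ?thesis
      using less.IH less.prems \<open>j < p\<close> by simp
  qed
qed

lemma pistar_measurable:
  "(\<lambda>z. pistar p E U \<delta> (fst z) (snd z)) \<in> borel_measurable (coord_measure p E)"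
proof -
  have "(\<lambda>z. snd z k) \<in> borel_measurable (coord_measure p E)" if "k < p" for k
    using that by (simp add: coord_measure_def)
  then show ?thesis
    unfolding pistar_def
    by (intro borel_measurable_times borel_measurable_prod measurable_compose[OF _ borel_measurable_exp]
        borel_measurable_sum borel_measurable_const powr_real_measurable Lfull_measurable) auto
qed

lemma envelope_measurable:
  "(\<lambda>z. envelope p E a c (fst z) (snd z)) \<in> borel_measurable (coord_measure p E)"
proof -
  have "(\<lambda>z. snd z k) \<in> borel_measurable (coord_measure p E)" if "k < p" for k
    using that by (simp add: coord_measure_def)
  moreover have "(\<lambda>z. fst z (i, k)) \<in> borel_measurable (coord_measure p E)"
    if "i \<in> later_nbrs p E k" for i k
    using that by (simp add: coord_measure_def Lidx_def later_nbrs_def)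
  ultimately show ?thesis
    unfolding envelope_def indep_trace_def by simp
qed

lemma Dpos_Int_space:
  "Dpos p \<inter> space (coord_measure p E) = (\<Pi>\<^sub>E ij\<in>Lidx p E. UNIV) \<times> (\<Pi>\<^sub>E k\<in>{..<p}. {0<..})"
  by (auto simp: Dpos_def coord_measure_def space_pair_measure space_PiM PiE_def Pi_def)

lemma sets_Dpos: "Dpos p \<inter> space (coord_measure p E) \<in> sets (coord_measure p E)"
  unfolding Dpos_Int_space by (unfold coord_measure_def, intro pair_measureI sets_PiM_I_finite)
    (auto simp: finite_Lidx)

lemma indicator_Dpos_measurable:
  "(indicator (Dpos p) :: _ \<Rightarrow> ennreal) \<in> borel_measurable (coord_measure p E)"
  using sets_Dpos by (simp add: borel_measurable_indicator_iff)

lemma emeasure_Dpos_nonzero: "emeasure (coord_measure p E) (Dpos p \<inter> space (coord_measure p E)) \<noteq> 0"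
proof -
  interpret P1: product_sigma_finite "\<lambda>_ :: nat \<times> nat. lborel :: real measure" by unfold_locales
  interpret P2: product_sigma_finite "\<lambda>_ :: nat. lborel :: real measure" by unfold_locales
  interpret sigma_finite_measure "Pi\<^sub>M {..<p} (\<lambda>_. lborel :: real measure)"
    by (rule P2.sigma_finite) simp
  have "emeasure (coord_measure p E) (Dpos p \<inter> space (coord_measure p E))
      = (\<Prod>ij\<in>Lidx p E. emeasure lborel (UNIV :: real set)) * (\<Prod>k<p. emeasure lborel {0::real<..})"
    unfolding Dpos_Int_space
    by (unfold coord_measure_def, simp add: emeasure_pair_measure_Times sets_PiM_I_finite finite_Lidx
        P1.emeasure_PiM P2.emeasure_PiM)
  moreover have "emeasure lborel {0::real<..} \<noteq> 0"
    using emeasure_mono[of "{0::real<..<1}" "{0<..}" lborel] by (auto simp: subset_eq)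
  ultimately show ?thesis by (simp add: finite_Lidx)
qed

lemma pistar_Dpos_measurable:
  "(\<lambda>z. ennreal (pistar p E U \<delta> (fst z) (snd z)) * indicator (Dpos p) z)
    \<in> borel_measurable (coord_measure p E)"
  by (intro borel_measurable_times_ennreal measurable_compose[OF pistar_measurable measurable_ennreal]
      indicator_Dpos_measurable)

lemma envelope_Dpos_measurable:
  "(\<lambda>z. ennreal (envelope p E a c (fst z) (snd z)) * indicator (Dpos p) z)
    \<in> borel_measurable (coord_measure p E)"
  by (intro borel_measurable_times_ennreal measurable_compose[OF envelope_measurable measurable_ennreal]
      indicator_Dpos_measurable)

lemma nn_integral_Dpos_pos:
  assumes meas: "(\<lambda>z. ennreal (f z) * indicator (Dpos p) z) \<in> borel_measurable (coord_measure p E)"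
    and pos: "\<And>z. z \<in> Dpos p \<Longrightarrow> 0 < f z"
  shows "0 < (\<integral>\<^sup>+ z. ennreal (f z) * indicator (Dpos p) z \<partial>coord_measure p E)"
proof (rule ccontr)
  assume "\<not> ?thesis"
  then have "AE z in coord_measure p E. ennreal (f z) * indicator (Dpos p) z = 0"
    by (simp add: nn_integral_0_iff_AE[OF meas])
  then have "AE z in coord_measure p E. z \<notin> Dpos p"
    by (rule eventually_mono) (auto simp: indicator_def ennreal_eq_0_iff dest: pos)
  then have "emeasure (coord_measure p E) (Dpos p \<inter> space (coord_measure p E)) = 0"
    by (subst (asm) AE_iff_measurable[OF sets_Dpos]) auto
  then show False using emeasure_Dpos_nonzero by simp
qed

section \<open>Integrability of the envelope\<close>

lemma nn_integral_gaussian_Lidx: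
  assumes "c > 0" and "\<forall>j<p. 0 < d j"
  shows "(\<integral>\<^sup>+ x. (\<Prod>ij\<in>Lidx p E. ennreal (exp (- (c * d (snd ij)) * (x ij)\<^sup>2)))
            \<partial>Pi\<^sub>M (Lidx p E) (\<lambda>_. lborel))
       = (\<Prod>j<p. ennreal (sqrt pi / sqrt (c * d j)) ^ nu p E j)"
proof -
  interpret product_sigma_finite "\<lambda>_ :: nat \<times> nat. lborel :: real measure" by unfold_locales
  have "(\<integral>\<^sup>+ x. (\<Prod>ij\<in>Lidx p E. ennreal (exp (- (c * d (snd ij)) * (x ij)\<^sup>2)))
            \<partial>Pi\<^sub>M (Lidx p E) (\<lambda>_. lborel))
      = (\<Prod>ij\<in>Lidx p E. \<integral>\<^sup>+ t. ennreal (exp (- (c * d (snd ij)) * t\<^sup>2)) \<partial>lborel)"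
    by (rule product_nn_integral_prod[OF finite_Lidx]) measurable
  also have "\<dots> = (\<Prod>ij\<in>Lidx p E. ennreal (sqrt pi / sqrt (c * d (snd ij))))"
    using assms by (intro prod.cong refl nn_integral_exp_neg_square) (auto simp: Lidx_def)
  also have "\<dots> = (\<Prod>j<p. ennreal (sqrt pi / sqrt (c * d j)) ^ nu p E j)"
    by (simp add: prod_Lidx card_later_nbrs)
  finally show ?thesis .
qed

lemma powr_mult_gaussian_factor:
  fixes t c a :: real
  assumes "t > 0" and "c > 0"
  shows "t powr a * (sqrt pi / sqrt (c * t)) ^ n = (sqrt pi / sqrt c) ^ n * t powr (a - n / 2)"
proof -
  have "sqrt t ^ n = t powr (n / 2)"
    using assms by (simp add: powr_half_sqrt[symmetric] powr_realpow[symmetric] powr_powr)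
  moreover have "t powr (a - n / 2) = t powr a / t powr (n / 2)"
    using assms by (simp add: powr_diff)
  ultimately show ?thesis
    using assms by (simp add: real_sqrt_mult power_divide power_mult_distrib)
qed

lemma nn_integral_envelope_Lidx:
  assumes c: "c > 0"
  shows "(\<integral>\<^sup>+ x. ennreal (envelope p E a c x d) * indicator (Dpos p) (x, d)
        \<partial>Pi\<^sub>M (Lidx p E) (\<lambda>_. lborel))
    = (\<Prod>j<p. ennreal ((sqrt pi / sqrt c) ^ nu p E j)
        * ennreal (indicator {0<..} (d j) * d j powr (a j - nu p E j / 2) * exp (- c * d j)))"
    (is "_ = (\<Prod>j<p. ?h j)")
proof -
  define G where "G = (\<Prod>j<p. ennreal (indicator {0<..} (d j) * d j powr a j * exp (- c * d j)))"
  define Q where "Q x = (\<Prod>ij\<in>Lidx p E. ennreal (exp (- (c * d (snd ij)) * (x ij)\<^sup>2)))"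
    for x :: "nat \<times> nat \<Rightarrow> real"
  have "(\<integral>\<^sup>+ x. ennreal (envelope p E a c x d) * indicator (Dpos p) (x, d)
        \<partial>Pi\<^sub>M (Lidx p E) (\<lambda>_. lborel))
      = G * (\<integral>\<^sup>+ x. Q x \<partial>Pi\<^sub>M (Lidx p E) (\<lambda>_. lborel))"
    unfolding envelope_Dpos_factor G_def Q_def by (rule nn_integral_cmult) measurable
  also have "\<dots> = (\<Prod>j<p. ?h j)"
  proof (cases "\<forall>j<p. 0 < d j")
    case True
    have "G * (\<integral>\<^sup>+ x. Q x \<partial>Pi\<^sub>M (Lidx p E) (\<lambda>_. lborel))
        = (\<Prod>j<p. ennreal (d j powr a j * exp (- c * d j))
            * ennreal (sqrt pi / sqrt (c * d j)) ^ nu p E j)"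
      unfolding Q_def nn_integral_gaussian_Lidx[OF c True] using True by (simp add: G_def prod.distrib)
    also have "\<dots> = (\<Prod>j<p. ?h j)"
    proof (intro prod.cong refl)
      fix j assume "j \<in> {..<p}"
      with True c have "d j > 0" "0 \<le> sqrt pi / sqrt (c * d j)" by auto
      then have "ennreal (d j powr a j * exp (- c * d j)) * ennreal (sqrt pi / sqrt (c * d j)) ^ nu p E j
          = ennreal (d j powr a j * (sqrt pi / sqrt (c * d j)) ^ nu p E j * exp (- c * d j))"
        by (simp add: ennreal_mult' ennreal_power mult_ac)
      also have "\<dots> = ?h j"
        using \<open>d j > 0\<close> c by (simp add: powr_mult_gaussian_factor ennreal_mult' ennreal_power mult_ac)
      finally show "ennreal (d j powr a j * exp (- c * d j))
          * ennreal (sqrt pi / sqrt (c * d j)) ^ nu p E j = ?h j" .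
    qed
    finally show ?thesis .
  next
    case False
    then obtain k where "k < p" "\<not> 0 < d k" by auto
    then have "G = 0" "(\<Prod>j<p. ?h j) = 0"
      by (auto simp: G_def intro!: prod_zero bexI[of _ k])
    then show ?thesis by simp
  qed
  finally show ?thesis .
qed

lemma nn_integral_envelope_finite:
  assumes c: "c > 0" and a: "\<forall>j<p. real (nu p E j) / 2 - 1 < a j"
  shows "(\<integral>\<^sup>+ z. ennreal (envelope p E a c (fst z) (snd z)) * indicator (Dpos p) z
            \<partial>coord_measure p E) < \<infinity>"
proof -
  define h where "h j t = ennreal ((sqrt pi / sqrt c) ^ nu p E j)
      * ennreal (indicator {0<..} t * t powr (a j - nu p E j / 2) * exp (- c * t))" for j t
  interpret P1: product_sigma_finite "\<lambda>_ :: nat \<times> nat. lborel :: real measure" by unfold_locales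
  interpret P2: product_sigma_finite "\<lambda>_ :: nat. lborel :: real measure" by unfold_locales
  interpret S1: sigma_finite_measure "Pi\<^sub>M (Lidx p E) (\<lambda>_. lborel :: real measure)"
    by (rule P1.sigma_finite[OF finite_Lidx])
  interpret S2: sigma_finite_measure "Pi\<^sub>M {..<p} (\<lambda>_. lborel :: real measure)"
    by (rule P2.sigma_finite) simp
  interpret pair_sigma_finite "Pi\<^sub>M (Lidx p E) (\<lambda>_. lborel :: real measure)"
      "Pi\<^sub>M {..<p} (\<lambda>_. lborel :: real measure)"
    by unfold_locales
  have "(\<integral>\<^sup>+ z. ennreal (envelope p E a c (fst z) (snd z)) * indicator (Dpos p) z \<partial>coord_measure p E)
      = (\<integral>\<^sup>+ d. \<integral>\<^sup>+ x. ennreal (envelope p E a c x d) * indicator (Dpos p) (x, d)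
          \<partial>Pi\<^sub>M (Lidx p E) (\<lambda>_. lborel) \<partial>Pi\<^sub>M {..<p} (\<lambda>_. lborel))"
    using nn_integral_snd[OF envelope_Dpos_measurable[of p E a c, unfolded coord_measure_def]]
    by (simp add: coord_measure_def)
  also have "\<dots> = (\<integral>\<^sup>+ d. (\<Prod>j<p. h j (d j)) \<partial>Pi\<^sub>M {..<p} (\<lambda>_. lborel))"
    by (simp add: nn_integral_envelope_Lidx[OF c] h_def)
  also have "\<dots> = (\<Prod>j<p. integral\<^sup>N lborel (h j))"
    by (rule P2.product_nn_integral_prod) (auto simp: h_def)
  also have "\<dots> < \<infinity>"
  proof -
    have "integral\<^sup>N lborel (h j) < \<infinity>" if "j < p" for j
    proof -
      have "a j - nu p E j / 2 > -1" using a that by fastforce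
      then have "(\<integral>\<^sup>+ t. ennreal (indicator {0<..} t * t powr (a j - nu p E j / 2) * exp (- c * t))
          \<partial>lborel) < \<infinity>"
        by (rule nn_integral_powr_exp_finite[OF _ c])
      then show ?thesis unfolding h_def by (subst nn_integral_cmult) (auto simp: ennreal_mult_less_top)
    qed
    then show ?thesis by (simp add: less_top[symmetric] ennreal_prod_eq_top)
  qed
  finally show ?thesis .
qed

lemma nn_integral_indicator_dominated_finite:
  fixes f g :: "'a \<Rightarrow> real"
  assumes g_meas: "(\<lambda>z. ennreal (g z) * indicator S z) \<in> borel_measurable M"
    and g_fin: "(\<integral>\<^sup>+ z. ennreal (g z) * indicator S z \<partial>M) < \<infinity>"
    and K: "0 \<le> K" and le: "\<And>z. z \<in> S \<Longrightarrow> f z \<le> K * g z"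
  shows "(\<integral>\<^sup>+ z. ennreal (f z) * indicator S z \<partial>M) < \<infinity>"
proof -
  have "(\<integral>\<^sup>+ z. ennreal (f z) * indicator S z \<partial>M)
      \<le> (\<integral>\<^sup>+ z. ennreal K * (ennreal (g z) * indicator S z) \<partial>M)"
  proof (intro nn_integral_mono)
    fix z
    have "ennreal (f z) \<le> ennreal K * ennreal (g z)" if "z \<in> S"
      using le[OF that] K by (simp add: ennreal_mult'[symmetric] ennreal_leI)
    then show "ennreal (f z) * indicator S z \<le> ennreal K * (ennreal (g z) * indicator S z)"
      by (cases "z \<in> S") (simp_all add: mult.assoc)
  qed
  also have "\<dots> = ennreal K * (\<integral>\<^sup>+ z. ennreal (g z) * indicator S z \<partial>M)"
    by (rule nn_integral_cmult[OF g_meas])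
  also have "\<dots> < \<infinity>" using g_fin by (simp add: ennreal_mult_less_top)
  finally show ?thesis .
qed

lemma nn_integral_Dpos_le_envelope_finite:
  assumes c: "c > 0" and a: "\<forall>j<p. real (nu p E j) / 2 - 1 < a j" and K: "0 \<le> K"
    and le: "\<And>x d. \<forall>k<p. 0 < d k \<Longrightarrow> f x d \<le> K * envelope p E a c x d"
  shows "(\<integral>\<^sup>+ z. ennreal (f (fst z) (snd z)) * indicator (Dpos p) z \<partial>coord_measure p E) < \<infinity>"
  using envelope_Dpos_measurable nn_integral_envelope_finite[OF c a] K
  by (rule nn_integral_indicator_dominated_finite) (auto simp: Dpos_def intro: le)

section \<open>Domination of the density\<close>

lemma mult_exp_neg_le:
  fixes t c :: real
  assumes "t \<ge> 0" and "c > 0"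
  shows "t * exp (- (c/2) * t) \<le> (4/c) * exp (- (c/4) * t)"
proof -
  have "c * t / 4 \<le> exp (c * t / 4)" using exp_ge_add_one_self[of "c * t / 4"] by linarith
  then have "t * exp (- (c/2) * t) \<le> (4/c) * exp (c * t / 4) * exp (- (c/2) * t)"
    using assms by (intro mult_right_mono) (auto simp: field_simps)
  also have "\<dots> = (4/c) * exp (- (c/4) * t)"
    by (simp add: mult.assoc flip: exp_add)
  finally show ?thesis .
qed

lemma pistar_le_envelope:
  assumes c: "0 \<le> c"
    and U: "\<And>v. c * (\<Sum>i<p. (v i)\<^sup>2) \<le> (\<Sum>i<p. \<Sum>j<p. v i * U i j * v j)"
    and d: "\<forall>k<p. 0 \<le> d k"
  shows "pistar p E U \<delta> x d \<le> envelope p E (\<lambda>j. (\<delta> j + 2 * real (nu p E j)) / 2) (c/2) x d"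
proof -
  have "c * indep_trace p E x d \<le> c * (\<Sum>i<p. Omega E x d i i)"
    using c d by (intro mult_left_mono indep_trace_le_trace_Omega)
  also have "\<dots> \<le> (\<Sum>i<p. \<Sum>j<p. U i j * Omega E x d i j)"
    using U d by (rule coercive_trace_Omega_le)
  finally show ?thesis
    by (auto simp: pistar_eq envelope_def intro!: mult_left_mono prod_nonneg)
qed

lemma abs_Omega_mult_pistar_le_envelope:
  assumes c: "0 < c"
    and U: "\<And>v. c * (\<Sum>i<p. (v i)\<^sup>2) \<le> (\<Sum>i<p. \<Sum>j<p. v i * U i j * v j)"
    and d: "\<forall>k<p. 0 \<le> d k" and ij: "i < p" "j < p"
  shows "\<bar>Omega E x d i j\<bar> * pistar p E U \<delta> x d
    \<le> (4/c) * envelope p E (\<lambda>j. (\<delta> j + 2 * real (nu p E j)) / 2) (c/4) x d"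
proof -
  define P where "P = (\<Prod>j<p. d j powr ((\<delta> j + 2 * real (nu p E j)) / 2))"
  define T where "T = (\<Sum>l<p. Omega E x d l l)"
  have "P \<ge> 0" "T \<ge> 0" using d by (auto simp: P_def T_def prod_nonneg trace_Omega_nonneg)
  have "\<bar>Omega E x d i j\<bar> * pistar p E U \<delta> x d \<le> T * (P * exp (- (c/2) * T))"
  proof (rule mult_mono)
    show "pistar p E U \<delta> x d \<le> P * exp (- (c/2) * T)"
      using coercive_trace_Omega_le[OF U d] \<open>P \<ge> 0\<close> by (simp add: pistar_eq P_def T_def mult_left_mono)
  qed (use abs_Omega_le_trace[OF d ij] \<open>T \<ge> 0\<close> pistar_nonneg in \<open>simp_all add: T_def\<close>)
  also have "\<dots> = P * (T * exp (- (c/2) * T))" by simp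
  also have "\<dots> \<le> P * ((4/c) * exp (- (c/4) * T))"
    using mult_exp_neg_le[OF \<open>T \<ge> 0\<close> c] \<open>P \<ge> 0\<close> by (rule mult_left_mono)
  also have "\<dots> \<le> P * ((4/c) * exp (- (c/4) * indep_trace p E x d))"
    using indep_trace_le_trace_Omega[OF d] c \<open>P \<ge> 0\<close> by (intro mult_left_mono) (auto simp: T_def)
  finally show ?thesis by (simp add: envelope_def P_def mult_ac)
qed

theorem theorem1:
  fixes p :: nat and E :: "nat \<Rightarrow> nat \<Rightarrow> bool"
    and U :: "nat \<Rightarrow> nat \<Rightarrow> real" and \<delta> :: "nat \<Rightarrow> real"
  assumes graph: "\<forall>i j. E i j \<longrightarrow> i < p \<and> j < p \<and> i \<noteq> j"
    and sym: "\<forall>i j. E i j \<longrightarrow> E j i"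
    and U_pd: "pos_def_mat p U"
    and delta_pos: "\<forall>i<p. 0 < \<delta> i"
  shows "(\<integral>\<^sup>+ z. ennreal (pistar p E U \<delta> (fst z) (snd z)) * indicator (Dpos p) z
            \<partial>coord_measure p E) < \<infinity>
    \<and> 0 < (\<integral>\<^sup>+ z. ennreal (pistar p E U \<delta> (fst z) (snd z)) * indicator (Dpos p) z
            \<partial>coord_measure p E)
    \<and> (\<forall>i<p. \<forall>j<p.
         (\<integral>\<^sup>+ z. ennreal (\<bar>Omega E (fst z) (snd z) i j\<bar> * pistar p E U \<delta> (fst z) (snd z))
            * indicator (Dpos p) z \<partial>coord_measure p E) < \<infinity>)"
proof -
  let ?I = "\<lambda>f. \<integral>\<^sup>+ z. ennreal (f (fst z) (snd z)) * indicator (Dpos p) z \<partial>coord_measure p E"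
  obtain c where c: "c > 0"
    and U: "\<And>v. c * (\<Sum>i<p. (v i)\<^sup>2) \<le> (\<Sum>i<p. \<Sum>j<p. v i * U i j * v j)"
    using pos_def_mat_coercive[OF U_pd] by blast
  define a where "a = (\<lambda>j. (\<delta> j + 2 * real (nu p E j)) / 2)"
  have a: "\<forall>j<p. real (nu p E j) / 2 - 1 < a j"
    using delta_pos by (auto simp: a_def add_pos_nonneg)
  have "?I (pistar p E U \<delta>) < \<infinity>"
    using c pistar_le_envelope[OF _ U]
    by (intro nn_integral_Dpos_le_envelope_finite[OF _ a, of "c/2" 1]) (auto simp: a_def less_imp_le)
  moreover have "0 < ?I (pistar p E U \<delta>)"
    by (rule nn_integral_Dpos_pos[OF pistar_Dpos_measurable]) (auto simp: Dpos_def pistar_pos)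
  moreover have "?I (\<lambda>x d. \<bar>Omega E x d i j\<bar> * pistar p E U \<delta> x d) < \<infinity>" if "i < p" "j < p" for i j
    using c abs_Omega_mult_pistar_le_envelope[OF c U _ that]
    by (intro nn_integral_Dpos_le_envelope_finite[OF _ a, of "c/4" "4/c"]) (auto simp: a_def less_imp_le)
  ultimately show ?thesis by blast
qed

end
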